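(* Let $(\Omega,\mathcal R,\mathcal K)$ be a bidirectional kinetic system with matrix of reactions having columns $R_1,\dots,R_{|\mathcal R|/2}$ and cycle space $\mathcal C$, and let $\mathcal R_a\subset\mathcal R$. Suppose there is a cycle $c\in\mathcal C$ with $\sum_{j=1}^{|\mathcal R|/2}\log\!\left(\frac{K_{-R_j}}{K_{R_j}}\right)c(j)\neq0$ and such that every $R_j$ with $c(j)\neq0$ (and its reverse) belongs to $\mathcal R_a$. Then $(\Omega,\mathcal R,\mathcal K)$ does not admit an $\mathcal R_a$-admissible closed completion.
   Context: A chemical network is $(\Omega,\mathcal R)$ with $\Omega=\{1,\dots,N\}$ and $\mathcal R$ a finite set of nonzero integer vectors indexed by $\Omega$. $I(R)=\{i:R(i)<0\}$, $F(R)=\{i:R(i)>0\}$. Bidirectional: $R\in\mathcal R\Rightarrow-R\in\mathcal R$; $\mathcal R_s$ contains exactly one of each pair $\{R,-R\}$; the matrix of reactions $\mathbf R$ has the elements $R_1,\dots,R_{|\mathcal R_s|}$ of $\mathcal R_s$ as columns; cycle space $\mathcal C=\ker\mathbf R$. Conservation laws $\mathcal M=(\mathrm{span}\,\mathcal R)^\perp$; conservative: $\mathcal M\cap(0,\infty)^\Omega\ne\emptyset$. Kinetic system: rates $\mathcal K:\mathcal R\to(0,\infty)$, $K_R=\mathcal K(R)$; detailed balance: there is $\bar N\in(0,\infty)^\Omega$ with $K_R\prod_{i\in I(R)}\bar N_i^{-R(i)}=K_{-R}\prod_{i\in F(R)}\bar N_i^{R(i)}$ for all $R\in\mathcal R_s$.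 Closed: detailed balance, conservative, and $I(R),F(R)\neq\emptyset$ for all reactions. $\pi_Av=(v(i))_{i\in A}$. For $(\Omega_c,\mathcal R_c,\mathcal K_c)$ with $\Omega\subset\Omega_c$ and positive $n=(n_i)_{i\in\Omega_c\setminus\Omega}$, reduced rates $\mathcal K_c[n](R)=\sum_{\bar R\in\mathcal R_c:\pi_\Omega\bar R=R}\mathcal K_c(\bar R)\prod_{s\in(\Omega_c\setminus\Omega)\cap I(\bar R)}n_s^{-\bar R(s)}$. A completion of $(\Omega,\mathcal R,\mathcal K)$ is a kinetic system $(\Omega_c,\mathcal R_c,\mathcal K_c)$ with $\Omega\subset\Omega_c$, $\mathcal R=\{\pi_\Omega R:R\in\mathcal R_c\}$, and $\mathcal K=\mathcal K_c[n]$ for some such $n$. It is $\mathcal R_a$-admissible if $\pi_{\Omega_c\setminus\Omega}R=0$ for every $R\in\mathcal R_c$ with $\pi_\Omega R\in\mathcal R_a$ (the reactions in $\mathcal R_a$ are the constrained reactions). *)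

theory Defs
  imports Complex_Main
begin

text \<open>Rates are functions from reactions to reals (only values on the reaction set matter).\<close>

definition species :: "nat \<Rightarrow> nat set" where
  "species N = {1..N}"

definition chem_network :: "nat \<Rightarrow> (nat \<Rightarrow> int) set \<Rightarrow> bool" where
  "chem_network N \<R> \<longleftrightarrow> finite \<R> \<and>
     (\<forall>R\<in>\<R>. R \<noteq> (\<lambda>_. 0) \<and> (\<forall>i. i \<notin> species N \<longrightarrow> R i = 0))"

definition kinetic_system :: "nat \<Rightarrow> (nat \<Rightarrow> int) set \<Rightarrow> ((nat \<Rightarrow> int) \<Rightarrow> real) \<Rightarrow> bool" where
  "kinetic_system N \<R> K \<longleftrightarrow> chem_network N \<R> \<and> (\<forall>R\<in>\<R>. K R > 0)"

definition react_I :: "nat \<Rightarrow> (nat \<Rightarrow> int) \<Rightarrow> nat set" where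
  "react_I N R = {i \<in> species N. R i < 0}"

definition react_F :: "nat \<Rightarrow> (nat \<Rightarrow> int) \<Rightarrow> nat set" where
  "react_F N R = {i \<in> species N. R i > 0}"

definition bidirectional :: "(nat \<Rightarrow> int) set \<Rightarrow> bool" where
  "bidirectional \<R> \<longleftrightarrow> (\<forall>R\<in>\<R>. (\<lambda>i. - R i) \<in> \<R>)"

text \<open>A list Rs enumerating a set \<R>_s containing exactly one element of each pair {R,-R};
  its entries (Rs ! 0, ..., Rs ! (m-1)) are the columns of the matrix of reactions.\<close>
definition reaction_columns :: "(nat \<Rightarrow> int) set \<Rightarrow> (nat \<Rightarrow> int) list \<Rightarrow> bool" where
  "reaction_columns \<R> Rs \<longleftrightarrow> distinct Rs \<and> set Rs \<subseteq> \<R> \<and>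
     (\<forall>R\<in>\<R>. R \<in> set Rs \<or> (\<lambda>i. - R i) \<in> set Rs) \<and>
     (\<forall>R\<in>set Rs. (\<lambda>i. - R i) \<notin> set Rs)"

text \<open>Cycle space: kernel of the matrix of reactions (c j is the coefficient of column Rs ! j).\<close>
definition is_cycle :: "nat \<Rightarrow> (nat \<Rightarrow> int) list \<Rightarrow> (nat \<Rightarrow> real) \<Rightarrow> bool" where
  "is_cycle N Rs c \<longleftrightarrow> (\<forall>i\<in>species N. (\<Sum>j<length Rs. c j * real_of_int ((Rs ! j) i)) = 0)"

definition detailed_balance :: "nat \<Rightarrow> (nat \<Rightarrow> int) set \<Rightarrow> ((nat \<Rightarrow> int) \<Rightarrow> real) \<Rightarrow> bool" where
  "detailed_balance N \<R> K \<longleftrightarrow> (\<exists>Nb :: nat \<Rightarrow> real. (\<forall>i\<in>species N. Nb i > 0) \<and>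
     (\<forall>R\<in>\<R>. K R * (\<Prod>i\<in>react_I N R. Nb i ^ nat (- R i))
              = K (\<lambda>i. - R i) * (\<Prod>i\<in>react_F N R. Nb i ^ nat (R i))))"

definition conservative :: "nat \<Rightarrow> (nat \<Rightarrow> int) set \<Rightarrow> bool" where
  "conservative N \<R> \<longleftrightarrow> (\<exists>m :: nat \<Rightarrow> real. (\<forall>i\<in>species N. m i > 0) \<and>
     (\<forall>R\<in>\<R>. (\<Sum>i\<in>species N. m i * real_of_int (R i)) = 0))"

definition closed_system :: "nat \<Rightarrow> (nat \<Rightarrow> int) set \<Rightarrow> ((nat \<Rightarrow> int) \<Rightarrow> real) \<Rightarrow> bool" where
  "closed_system N \<R> K \<longleftrightarrow> kinetic_system N \<R> K \<and> bidirectional \<R> \<and>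
     detailed_balance N \<R> K \<and> conservative N \<R> \<and>
     (\<forall>R\<in>\<R>. react_I N R \<noteq> {} \<and> react_F N R \<noteq> {})"

definition proj :: "nat set \<Rightarrow> (nat \<Rightarrow> int) \<Rightarrow> (nat \<Rightarrow> int)" where
  "proj A v = (\<lambda>i. if i \<in> A then v i else 0)"

definition reduced_rate :: "nat \<Rightarrow> nat \<Rightarrow> (nat \<Rightarrow> int) set \<Rightarrow> ((nat \<Rightarrow> int) \<Rightarrow> real)
    \<Rightarrow> (nat \<Rightarrow> real) \<Rightarrow> (nat \<Rightarrow> int) \<Rightarrow> real" where
  "reduced_rate N Nc \<R>c Kc n R =
     (\<Sum>Rb\<in>{Rb\<in>\<R>c. proj (species N) Rb = R}.
        Kc Rb * (\<Prod>s\<in>(species Nc - species N) \<inter> react_I Nc Rb. n s ^ nat (- Rb s)))"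

definition completion :: "nat \<Rightarrow> (nat \<Rightarrow> int) set \<Rightarrow> ((nat \<Rightarrow> int) \<Rightarrow> real)
    \<Rightarrow> nat \<Rightarrow> (nat \<Rightarrow> int) set \<Rightarrow> ((nat \<Rightarrow> int) \<Rightarrow> real) \<Rightarrow> bool" where
  "completion N \<R> K Nc \<R>c Kc \<longleftrightarrow> species N \<subseteq> species Nc \<and> kinetic_system Nc \<R>c Kc \<and>
     \<R> = proj (species N) ` \<R>c \<and>
     (\<exists>n :: nat \<Rightarrow> real. (\<forall>s\<in>species Nc - species N. n s > 0) \<and>
        (\<forall>R\<in>\<R>. K R = reduced_rate N Nc \<R>c Kc n R))"

definition admissible :: "nat \<Rightarrow> (nat \<Rightarrow> int) set \<Rightarrow> nat \<Rightarrow> (nat \<Rightarrow> int) set \<Rightarrow> bool" where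
  "admissible N \<R>a Nc \<R>c \<longleftrightarrow>
     (\<forall>Rb\<in>\<R>c. proj (species N) Rb \<in> \<R>a \<longrightarrow> (\<forall>s\<in>species Nc - species N. Rb s = 0))"

end

theory Submission
  imports Defs
begin

text \<open>Detailed balance of the completed system, with equilibrium \<open>N\<^sub>b\<close>, turns every log-ratio
  \<open>ln (K\<^sub>-\<^sub>R / K\<^sub>R)\<close> of completed rates into the gradient \<open>- (\<Sum>\<^sub>i R i ln (N\<^sub>b i))\<close>.
  Admissibility forces a constrained reaction to be its own unique lift, involving no hidden
  species, so its reduced rate equals its completed rate. The cycle \<open>c\<close> is supported on
  constrained reactions, hence the weighted sum of log-ratios is the pairing of \<open>\<^bold>R c = 0\<close> with
  \<open>- ln N\<^sub>b\<close>, which vanishes.\<close>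

lemma ln_prod_power:
  fixes x :: "'a \<Rightarrow> real"
  assumes "finite A" and "\<forall>i\<in>A. x i > 0"
  shows "ln (\<Prod>i\<in>A. x i ^ k i) = (\<Sum>i\<in>A. real (k i) * ln (x i))"
  using assms by (subst ln_prod) (auto simp: ln_realpow)

lemma finite_react_I: "finite (react_I N R)"
  and finite_react_F: "finite (react_F N R)"
  unfolding react_I_def react_F_def species_def by auto

lemma sum_species_split_react:
  fixes x :: "nat \<Rightarrow> real"
  shows "(\<Sum>i\<in>species N. real_of_int (R i) * x i)
       = (\<Sum>i\<in>react_F N R. real_of_int (R i) * x i) + (\<Sum>i\<in>react_I N R. real_of_int (R i) * x i)"
proof -
  have "(\<Sum>i\<in>species N. real_of_int (R i) * x i)
      = (\<Sum>i\<in>react_F N R \<union> react_I N R. real_of_int (R i) * x i)"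
    by (rule sum.mono_neutral_right) (auto simp: species_def react_I_def react_F_def)
  also have "\<dots> = (\<Sum>i\<in>react_F N R. real_of_int (R i) * x i)
                 + (\<Sum>i\<in>react_I N R. real_of_int (R i) * x i)"
    by (rule sum.union_disjoint) (auto simp: species_def react_I_def react_F_def)
  finally show ?thesis .
qed

lemma ln_rate_ratio_detailed_balance:
  fixes Nb :: "nat \<Rightarrow> real" and a b :: real
  assumes pos: "\<forall>i\<in>species N. Nb i > 0" and "a > 0" and "b > 0"
    and balance: "a * (\<Prod>i\<in>react_I N R. Nb i ^ nat (- R i))
                  = b * (\<Prod>i\<in>react_F N R. Nb i ^ nat (R i))"
  shows "ln (b / a) = - (\<Sum>i\<in>species N. real_of_int (R i) * ln (Nb i))"
proof -
  let ?P = "\<Prod>i\<in>react_I N R. Nb i ^ nat (- R i)"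
  let ?Q = "\<Prod>i\<in>react_F N R. Nb i ^ nat (R i)"
  have pos_I: "\<forall>i\<in>react_I N R. Nb i > 0" and pos_F: "\<forall>i\<in>react_F N R. Nb i > 0"
    using pos by (auto simp: react_I_def react_F_def)
  have "?P > 0" "?Q > 0"
    using pos_I pos_F by (auto intro: prod_pos)
  moreover have "b / a = ?P / ?Q"
    using balance \<open>a > 0\<close> \<open>?Q > 0\<close> by (simp add: field_simps)
  ultimately have "ln (b / a) = ln ?P - ln ?Q"
    by (simp add: ln_div)
  also have "ln ?P = - (\<Sum>i\<in>react_I N R. real_of_int (R i) * ln (Nb i))"
    using ln_prod_power[OF finite_react_I pos_I, of "\<lambda>i. nat (- R i)"]
    by (simp add: react_I_def sum_negf)
  also have "ln ?Q = (\<Sum>i\<in>react_F N R. real_of_int (R i) * ln (Nb i))"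
    using ln_prod_power[OF finite_react_F pos_F, of "\<lambda>i. nat (R i)"]
    by (simp add: react_F_def)
  finally show ?thesis
    by (simp add: sum_species_split_react)
qed

lemma admissible_fiber_constrained:
  assumes "admissible N \<R>a Nc \<R>c" and "chem_network Nc \<R>c"
    and "R \<in> \<R>a" and "R \<in> proj (species N) ` \<R>c"
  shows "{Rb\<in>\<R>c. proj (species N) Rb = R} = {R}"
proof -
  have lift_eq: "Rb = R" if "Rb \<in> \<R>c" "proj (species N) Rb = R" for Rb
  proof
    fix i
    have "\<forall>s\<in>species Nc - species N. Rb s = 0" "\<forall>s. s \<notin> species Nc \<longrightarrow> Rb s = 0"
      using assms that by (auto simp: admissible_def chem_network_def)
    then show "Rb i = R i"
      using that(2) by (cases "i \<in> species Nc") (auto simp: proj_def)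
  qed
  obtain Rb where "Rb \<in> \<R>c" "proj (species N) Rb = R"
    using assms(4) by blast
  moreover from this lift_eq have "Rb = R" by blast
  ultimately show ?thesis using lift_eq by auto
qed

lemma reduced_rate_unique_lift:
  assumes "{Rb\<in>\<R>c. proj (species N) Rb = R} = {R}" and "\<forall>i. i \<notin> species N \<longrightarrow> R i = 0"
  shows "reduced_rate N Nc \<R>c Kc n R = Kc R"
proof -
  have "(species Nc - species N) \<inter> react_I Nc R = {}"
    using assms(2) by (auto simp: react_I_def)
  then show ?thesis
    using assms(1) by (simp add: reduced_rate_def)
qed

lemma admissible_completion_constrained_rate:
  assumes "completion N \<R> K Nc \<R>c Kc" and "admissible N \<R>a Nc \<R>c"
    and "chem_network N \<R>" and "\<R>a \<subseteq> \<R>" and "R \<in> \<R>a"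
  shows "R \<in> \<R>c" and "K R = Kc R"
proof -
  have "R \<in> \<R>" and support: "\<forall>i. i \<notin> species N \<longrightarrow> R i = 0"
    using assms(3-5) by (auto simp: chem_network_def)
  moreover have "\<R> = proj (species N) ` \<R>c" and "chem_network Nc \<R>c"
    using assms(1) by (auto simp: completion_def kinetic_system_def)
  ultimately have fiber: "{Rb\<in>\<R>c. proj (species N) Rb = R} = {R}"
    using admissible_fiber_constrained[OF assms(2) _ assms(5)] by blast
  then show "R \<in> \<R>c" by blast
  obtain n where "\<forall>R\<in>\<R>. K R = reduced_rate N Nc \<R>c Kc n R"
    using assms(1) unfolding completion_def by blast
  with \<open>R \<in> \<R>\<close> show "K R = Kc R"
    using reduced_rate_unique_lift[OF fiber support] by simp
qed

lemma constrained_ln_rate_ratio: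
  fixes Nb :: "nat \<Rightarrow> real"
  assumes comp: "completion N \<R> K Nc \<R>c Kc" and adm: "admissible N \<R>a Nc \<R>c"
    and network: "chem_network N \<R>" and "\<R>a \<subseteq> \<R>"
    and R: "R \<in> \<R>a" "(\<lambda>i. - R i) \<in> \<R>a"
    and Nb_pos: "\<forall>i\<in>species Nc. Nb i > 0"
    and balance: "\<forall>R\<in>\<R>c. Kc R * (\<Prod>i\<in>react_I Nc R. Nb i ^ nat (- R i))
                          = Kc (\<lambda>i. - R i) * (\<Prod>i\<in>react_F Nc R. Nb i ^ nat (R i))"
  shows "ln (K (\<lambda>i. - R i) / K R) = - (\<Sum>i\<in>species N. real_of_int (R i) * ln (Nb i))"
proof -
  note constrained = admissible_completion_constrained_rate[OF comp adm network \<open>\<R>a \<subseteq> \<R>\<close>]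
  have "\<forall>R\<in>\<R>c. Kc R > 0" and "species N \<subseteq> species Nc"
    using comp by (auto simp: kinetic_system_def completion_def)
  then have "ln (K (\<lambda>i. - R i) / K R) = - (\<Sum>i\<in>species Nc. real_of_int (R i) * ln (Nb i))"
    using constrained[OF R(1)] constrained[OF R(2)] balance
    by (intro ln_rate_ratio_detailed_balance[OF Nb_pos]) auto
  also have "(\<Sum>i\<in>species Nc. real_of_int (R i) * ln (Nb i))
           = (\<Sum>i\<in>species N. real_of_int (R i) * ln (Nb i))"
    using \<open>species N \<subseteq> species Nc\<close> R(1) \<open>\<R>a \<subseteq> \<R>\<close> network
    by (intro sum.mono_neutral_right) (auto simp: species_def chem_network_def)
  finally show ?thesis .
qed

lemma is_cycle_sum_gradient:
  assumes "is_cycle N Rs c"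
  shows "(\<Sum>j<length Rs. (\<Sum>i\<in>species N. real_of_int ((Rs ! j) i) * L i) * c j) = 0"
proof -
  have "(\<Sum>j<length Rs. (\<Sum>i\<in>species N. real_of_int ((Rs ! j) i) * L i) * c j)
      = (\<Sum>i\<in>species N. (\<Sum>j<length Rs. c j * real_of_int ((Rs ! j) i)) * L i)"
    by (simp add: sum_distrib_left sum_distrib_right sum.swap[of _ "species N"] mult_ac)
  also have "\<dots> = 0"
    using assms by (simp add: is_cycle_def)
  finally show ?thesis .
qed

theorem proposition6p8:
  fixes N :: nat and \<R> \<R>a :: "(nat \<Rightarrow> int) set" and K :: "(nat \<Rightarrow> int) \<Rightarrow> real"
    and Rs :: "(nat \<Rightarrow> int) list" and c :: "nat \<Rightarrow> real"
  assumes "kinetic_system N \<R> K"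
    and "bidirectional \<R>"
    and "reaction_columns \<R> Rs"
    and "\<R>a \<subseteq> \<R>"
    and "is_cycle N Rs c"
    and "(\<Sum>j<length Rs. ln (K (\<lambda>i. - (Rs ! j) i) / K (Rs ! j)) * c j) \<noteq> 0"
    and "\<forall>j<length Rs. c j \<noteq> 0 \<longrightarrow> Rs ! j \<in> \<R>a \<and> (\<lambda>i. - (Rs ! j) i) \<in> \<R>a"
  shows "\<not> (\<exists>Nc \<R>c Kc. completion N \<R> K Nc \<R>c Kc \<and> admissible N \<R>a Nc \<R>c
                        \<and> closed_system Nc \<R>c Kc)"
proof
  assume "\<exists>Nc \<R>c Kc. completion N \<R> K Nc \<R>c Kc \<and> admissible N \<R>a Nc \<R>c
                        \<and> closed_system Nc \<R>c Kc"
  then obtain Nc \<R>c Kc where comp: "completion N \<R> K Nc \<R>c Kc"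
    and adm: "admissible N \<R>a Nc \<R>c" and closed: "closed_system Nc \<R>c Kc" by blast
  obtain Nb where Nb_pos: "\<forall>i\<in>species Nc. Nb i > 0"
    and balance: "\<forall>R\<in>\<R>c. Kc R * (\<Prod>i\<in>react_I Nc R. Nb i ^ nat (- R i))
                          = Kc (\<lambda>i. - R i) * (\<Prod>i\<in>react_F Nc R. Nb i ^ nat (R i))"
    using closed by (auto simp: closed_system_def detailed_balance_def)
  have network: "chem_network N \<R>"
    using assms(1) by (simp add: kinetic_system_def)
  have log_ratio: "ln (K (\<lambda>i. - (Rs ! j) i) / K (Rs ! j))
      = - (\<Sum>i\<in>species N. real_of_int ((Rs ! j) i) * ln (Nb i))"
    if "j < length Rs" "c j \<noteq> 0" for j
    using assms(7) that
    by (intro constrained_ln_rate_ratio[OF comp adm network assms(4) _ _ Nb_pos balance]) auto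
  have "(\<Sum>j<length Rs. ln (K (\<lambda>i. - (Rs ! j) i) / K (Rs ! j)) * c j)
      = - (\<Sum>j<length Rs. (\<Sum>i\<in>species N. real_of_int ((Rs ! j) i) * ln (Nb i)) * c j)"
    unfolding sum_negf[symmetric] by (rule sum.cong) (use log_ratio in force)+
  with assms(6) is_cycle_sum_gradient[OF assms(5)] show False by simp
qed

end
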